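(* Let $T$ be a standard Young tableau of shape $\lambda\vdash k$. Then for $n\ge k$, the number of standard Young tableaux with $n$ cells (of any shape) that contain $T$ as a subtableau, i.e., in which the cells with entries $1,\ldots,k$ form exactly $T$, equals $$\sum_{j=0}^{k}\sum_{\mu\vdash j}f^{\lambda/\mu}\binom{n-k}{k-j}t_{n-2k+j}.$$
   Context: $f^{\lambda/\mu}$ is the number of standard Young tableaux of skew shape $\lambda/\mu$ (zero if $\mu\not\subseteq\lambda$), with $f^{\lambda/\emptyset}=f^\lambda$. $t_m$ denotes the number of involutions in $\mathcal{S}_m$ ($t_0=1$), and terms with $k-j>n-k$ are $0$. *)

theory Defs
  imports "HOL-Combinatorics.Combinatorics"
begin

text \<open>Cells are pairs (row, column), 0-indexed.
  A partition of k corresponds to a Young diagram with k cells.\<close>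

definition young :: "(nat \<times> nat) set \<Rightarrow> bool" where
  "young D \<longleftrightarrow> finite D \<and>
     (\<forall>i j i' j'. (i, j) \<in> D \<and> i' \<le> i \<and> j' \<le> j \<longrightarrow> (i', j') \<in> D)"

text \<open>A standard Young tableau of skew shape lam/mu: a bijection from the cells of
  lam - mu onto {1..|lam - mu|}, increasing weakly (hence strictly) along rows and
  columns; the function is 0 outside the cells of the shape.\<close>

definition skew_syt :: "(nat \<times> nat) set \<Rightarrow> (nat \<times> nat) set \<Rightarrow> (nat \<times> nat \<Rightarrow> nat) \<Rightarrow> bool" where
  "skew_syt lam mu T \<longleftrightarrow>
     bij_betw T (lam - mu) {1..card (lam - mu)} \<and>
     (\<forall>c. c \<notin> lam - mu \<longrightarrow> T c = 0) \<and>
     (\<forall>i j i' j'. (i, j) \<in> lam - mu \<and> (i', j') \<in> lam - mu \<and> i \<le> i' \<and> j \<le> j'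
        \<longrightarrow> T (i, j) \<le> T (i', j'))"

definition syt :: "(nat \<times> nat) set \<Rightarrow> (nat \<times> nat \<Rightarrow> nat) \<Rightarrow> bool" where
  "syt lam T \<longleftrightarrow> skew_syt lam {} T"

definition skew_f :: "(nat \<times> nat) set \<Rightarrow> (nat \<times> nat) set \<Rightarrow> nat" where
  "skew_f lam mu = (if mu \<subseteq> lam then card {T. skew_syt lam mu T} else 0)"

definition num_involutions :: "nat \<Rightarrow> nat" where
  "num_involutions m = card {p. p permutes {..<m} \<and> p \<circ> p = id}"

definition restrict_le :: "nat \<Rightarrow> (nat \<times> nat \<Rightarrow> nat) \<Rightarrow> (nat \<times> nat \<Rightarrow> nat)" where
  "restrict_le k T = (\<lambda>c. if T c \<le> k then T c else 0)"

end

theory Submission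
  imports Defs
begin

text \<open>
  Subtracting k from the entries of a standard Young tableau of shape \<nu> that extends T leaves a
  standard skew tableau of shape \<nu>/\<lambda>, and conversely; so the count is the sum of f^(\<nu>/\<lambda>)
  over \<nu> \<turnstile> n, i.e. the number of paths of length n - k going up from \<lambda> in Young's lattice.
  The up and down operators of Young's lattice satisfy DU = UD + I, hence D^i U = U D^i + i D^(i-1).
  Together with the recurrence t(m+1) = t(m) + m t(m-1) this shows, by induction on m, that the
  number of up-paths of length m from \<lambda> is the sum over i of (m choose i) t(m-i) times the
  number of down-paths of length i from \<lambda>; and the down-paths of length i from \<lambda> are
  counted by the sum of f^(\<lambda>/\<mu>) over \<mu> \<turnstile> k - i.
\<close>

section \<open>Young diagrams and their corners\<close>

lemma young_finite: "young D \<Longrightarrow> finite D"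
  by (simp add: young_def)

lemma young_downclosed: "young D \<Longrightarrow> (i, j) \<in> D \<Longrightarrow> i' \<le> i \<Longrightarrow> j' \<le> j \<Longrightarrow> (i', j') \<in> D"
  unfolding young_def by blast

lemma young_insert_iff:
  assumes "young D" "(i, j) \<notin> D"
  shows "young (insert (i, j) D) \<longleftrightarrow> (0 < i \<longrightarrow> (i - 1, j) \<in> D) \<and> (0 < j \<longrightarrow> (i, j - 1) \<in> D)"
proof
  assume "young (insert (i, j) D)"
  then show "(0 < i \<longrightarrow> (i - 1, j) \<in> D) \<and> (0 < j \<longrightarrow> (i, j - 1) \<in> D)"
    using young_downclosed[of "insert (i, j) D" i j "i - 1" j]
      young_downclosed[of "insert (i, j) D" i j i "j - 1"] by auto
next
  assume adj: "(0 < i \<longrightarrow> (i - 1, j) \<in> D) \<and> (0 < j \<longrightarrow> (i, j - 1) \<in> D)"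
  have "(i', j') \<in> insert (i, j) D" if "i' \<le> i" "j' \<le> j" for i' j'
  proof (cases "i' < i")
    case True
    then show ?thesis using adj young_downclosed[OF assms(1), of "i - 1" j i' j'] that by auto
  next
    case False
    then show ?thesis using adj young_downclosed[OF assms(1), of i "j - 1" i' j'] that
      by (cases "j' < j") auto
  qed
  then show "young (insert (i, j) D)"
    using assms(1) unfolding young_def by blast
qed

lemma young_remove_iff:
  assumes "young D" "(i, j) \<in> D"
  shows "young (D - {(i, j)}) \<longleftrightarrow> (Suc i, j) \<notin> D \<and> (i, Suc j) \<notin> D"
proof
  assume "young (D - {(i, j)})"
  then show "(Suc i, j) \<notin> D \<and> (i, Suc j) \<notin> D"
    using young_downclosed[of "D - {(i, j)}" "Suc i" j i j] young_downclosed[of "D - {(i, j)}" i "Suc j" i j]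
    by auto
next
  assume "(Suc i, j) \<notin> D \<and> (i, Suc j) \<notin> D"
  then have "(i', j') \<noteq> (i, j)" if "(a, b) \<in> D" "(a, b) \<noteq> (i, j)" "i' \<le> a" "j' \<le> b" for a b i' j'
    using that young_downclosed[OF assms(1), of a b "Suc i" j] young_downclosed[OF assms(1), of a b i "Suc j"]
    by (cases "i < a") auto
  then show "young (D - {(i, j)})"
    using assms(1) unfolding young_def by blast
qed

lemma young_Un: "young A \<Longrightarrow> young B \<Longrightarrow> young (A \<union> B)"
  unfolding young_def by blast

lemma young_Int: "young A \<Longrightarrow> young B \<Longrightarrow> young (A \<inter> B)"
  unfolding young_def by blast

lemma young_cell_bounds:
  assumes "young D" "(i, j) \<in> D"
  shows "i < card D" "j < card D"
proof -
  have "(\<lambda>x. (x, 0)) ` {..i} \<subseteq> D" "(\<lambda>y. (0, y)) ` {..j} \<subseteq> D"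
    using young_downclosed[OF assms] by auto
  moreover have "card ((\<lambda>x. (x, 0::nat)) ` {..i}) = Suc i" "card ((\<lambda>y. (0::nat, y)) ` {..j}) = Suc j"
    by (simp_all add: card_image inj_on_def)
  ultimately show "i < card D" "j < card D"
    using card_mono[OF young_finite[OF assms(1)]] by (metis Suc_le_eq)+
qed

definition young_diagrams :: "nat \<Rightarrow> (nat \<times> nat) set set" where
  "young_diagrams n = {D. young D \<and> card D = n}"

lemma finite_young_diagrams: "finite (young_diagrams n)"
proof (rule finite_subset)
  show "young_diagrams n \<subseteq> Pow ({..<n} \<times> {..<n})"
    unfolding young_diagrams_def using young_cell_bounds by fastforce
qed simp

definition addable_cells :: "(nat \<times> nat) set \<Rightarrow> (nat \<times> nat) set" where
  "addable_cells D = {a. a \<notin> D \<and> young (insert a D)}"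

definition removable_cells :: "(nat \<times> nat) set \<Rightarrow> (nat \<times> nat) set" where
  "removable_cells D = {b. b \<in> D \<and> young (D - {b})}"

lemma young_insert_addable: "a \<in> addable_cells D \<Longrightarrow> young (insert a D)"
  by (simp add: addable_cells_def)

lemma young_remove_removable: "b \<in> removable_cells D \<Longrightarrow> young (D - {b})"
  by (simp add: removable_cells_def)

lemma card_insert_addable: "young D \<Longrightarrow> a \<in> addable_cells D \<Longrightarrow> card (insert a D) = Suc (card D)"
  using young_finite by (auto simp: addable_cells_def)

lemma card_remove_removable: "young D \<Longrightarrow> b \<in> removable_cells D \<Longrightarrow> card (D - {b}) = card D - 1"
  using young_finite by (auto simp: removable_cells_def)

lemma finite_addable_cells:
  assumes "young D"
  shows "finite (addable_cells D)"
proof (rule finite_subset)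
  show "addable_cells D \<subseteq> {..card D} \<times> {..card D}"
    using young_cell_bounds[OF young_insert_addable] card_insert_addable[OF assms]
    by (fastforce simp del: card.insert)
qed simp

lemma finite_removable_cells: "young D \<Longrightarrow> finite (removable_cells D)"
  unfolding removable_cells_def using young_finite by auto

definition row_length :: "(nat \<times> nat) set \<Rightarrow> nat \<Rightarrow> nat" where
  "row_length D i = card {j. (i, j) \<in> D}"

lemma downclosed_eq_lessThan:
  fixes S :: "nat set"
  assumes "finite S" "\<And>x y. x \<in> S \<Longrightarrow> y \<le> x \<Longrightarrow> y \<in> S"
  shows "S = {..<card S}"
proof -
  have "S \<subseteq> {..<card S}"
  proof
    fix x assume "x \<in> S"
    then have "{..x} \<subseteq> S" using assms(2) by auto
    then have "card {..x} \<le> card S" using assms(1) card_mono by blast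
    then show "x \<in> {..<card S}" by simp
  qed
  then show ?thesis using card_subset_eq[of "{..<card S}" S] by simp
qed

lemma young_mem_iff_row_length:
  assumes "young D"
  shows "(i, j) \<in> D \<longleftrightarrow> j < row_length D i"
proof -
  have "{j. (i, j) \<in> D} \<subseteq> snd ` D"
    by force
  then have "finite {j. (i, j) \<in> D}"
    using young_finite[OF assms] finite_subset by blast
  then have "{j. (i, j) \<in> D} = {..<row_length D i}"
    unfolding row_length_def by (rule downclosed_eq_lessThan) (use young_downclosed[OF assms] in blast)
  then show ?thesis by blast
qed

lemma addable_cells_iff:
  assumes "young D"
  shows "(i, j) \<in> addable_cells D \<longleftrightarrow> j = row_length D i \<and> (0 < i \<longrightarrow> row_length D i < row_length D (i - 1))"
proof -
  have "(i, j) \<in> addable_cells D \<longleftrightarrow> row_length D i \<le> j \<and> (0 < i \<longrightarrow> j < row_length D (i - 1))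
      \<and> (0 < j \<longrightarrow> j - 1 < row_length D i)"
    unfolding addable_cells_def using young_insert_iff[OF assms] young_mem_iff_row_length[OF assms] by auto
  then show ?thesis by auto
qed

lemma removable_cells_iff:
  assumes "young D"
  shows "(i, j) \<in> removable_cells D \<longleftrightarrow> Suc j = row_length D i \<and> row_length D (Suc i) \<le> j"
proof -
  have "(i, j) \<in> removable_cells D \<longleftrightarrow> j < row_length D i \<and> row_length D (Suc i) \<le> j \<and> row_length D i \<le> Suc j"
    unfolding removable_cells_def using young_remove_iff[OF assms] young_mem_iff_row_length[OF assms]
    by (metis (no_types, lifting) mem_Collect_eq not_le)
  then show ?thesis by auto
qed

lemma card_addable_cells:
  assumes "young D"
  shows "card (addable_cells D) = Suc (card (removable_cells D))"
proof -
  \<comment> \<open>The removable cell ending row i matches the addable cell ending row i + 1; only the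
    addable cell of row 0 is left over.\<close>
  define first_addable where "first_addable = (0::nat, row_length D 0)"
  define below where "below = (\<lambda>(i::nat, j::nat). (Suc i, row_length D (Suc i)))"
  define above where "above = (\<lambda>(i::nat, j::nat). (i - 1, row_length D (i - 1) - 1))"
  have first: "first_addable \<in> addable_cells D"
    using addable_cells_iff[OF assms] by (simp add: first_addable_def)
  have "bij_betw below (removable_cells D) (addable_cells D - {first_addable})"
  proof (rule bij_betw_byWitness[where f' = above])
    show "\<forall>a\<in>removable_cells D. above (below a) = a"
      using removable_cells_iff[OF assms] by (auto simp: above_def below_def)
    show "\<forall>a\<in>addable_cells D - {first_addable}. below (above a) = a"
    proof
      fix a assume a: "a \<in> addable_cells D - {first_addable}"
      obtain i j where [simp]: "a = (i, j)" by (cases a)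
      have "0 < i" using a addable_cells_iff[OF assms] by (cases i) (auto simp: first_addable_def)
      then show "below (above a) = a"
        using a addable_cells_iff[OF assms] by (auto simp: above_def below_def)
    qed
    show "below ` removable_cells D \<subseteq> addable_cells D - {first_addable}"
      using removable_cells_iff[OF assms] addable_cells_iff[OF assms]
      by (auto simp: below_def first_addable_def)
    show "above ` (addable_cells D - {first_addable}) \<subseteq> removable_cells D"
    proof
      fix b assume "b \<in> above ` (addable_cells D - {first_addable})"
      then obtain i j where a: "(i, j) \<in> addable_cells D - {first_addable}" and b: "b = above (i, j)"
        by auto
      have "0 < i" using a addable_cells_iff[OF assms] by (cases i) (auto simp: first_addable_def)
      then show "b \<in> removable_cells D"
        using a b addable_cells_iff[OF assms] removable_cells_iff[OF assms] by (auto simp: above_def)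
    qed
  qed
  then have "card (removable_cells D) = card (addable_cells D) - 1"
    using bij_betw_same_card card_Diff_singleton[OF first] by metis
  moreover have "card (addable_cells D) > 0"
    using first finite_addable_cells[OF assms] card_gt_0_iff by blast
  ultimately show ?thesis by simp
qed

lemma addable_imp_removable_insert: "young L \<Longrightarrow> a \<in> addable_cells L \<Longrightarrow> a \<in> removable_cells (insert a L)"
  unfolding addable_cells_def removable_cells_def by (simp add: Diff_insert_absorb)

lemma removable_imp_addable_remove: "young L \<Longrightarrow> b \<in> removable_cells L \<Longrightarrow> b \<in> addable_cells (L - {b})"
  unfolding addable_cells_def removable_cells_def by (auto simp: insert_absorb)

lemma removable_insert_iff:
  assumes "young L" "a \<in> addable_cells L" "b \<noteq> a"
  shows "b \<in> removable_cells (insert a L) \<longleftrightarrow> b \<in> removable_cells L \<and> a \<in> addable_cells (L - {b})"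
proof -
  have swap: "insert a (L - {b}) = insert a L - {b}" using assms(3) by auto
  have "young (L - {b})" if "young (insert a L - {b})"
  proof -
    have "L - {b} = (insert a L - {b}) \<inter> L" using assms(2) by (auto simp: addable_cells_def)
    then show ?thesis using young_Int[OF that assms(1)] by simp
  qed
  then show ?thesis using assms swap by (auto simp: removable_cells_def addable_cells_def)
qed

lemma addable_of_addable_remove:
  assumes "young L" "b \<in> removable_cells L" "a \<noteq> b" "a \<in> addable_cells (L - {b})"
  shows "a \<in> addable_cells L"
proof -
  have "insert a L = L \<union> insert a (L - {b})" using assms(2) by (auto simp: removable_cells_def)
  then have "young (insert a L)" using young_Un[OF assms(1) young_insert_addable[OF assms(4)]] by simp
  then show ?thesis using assms(3,4) by (auto simp: addable_cells_def)
qed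

section \<open>Paths in Young's lattice\<close>

fun down_paths :: "nat \<Rightarrow> (nat \<times> nat) set \<Rightarrow> nat" where
  "down_paths 0 L = 1"
| "down_paths (Suc i) L = (\<Sum>b\<in>removable_cells L. down_paths i (L - {b}))"

lemma sum_removable_insert:
  assumes "young L" "a \<in> addable_cells L"
  shows "(\<Sum>b\<in>removable_cells (insert a L). f (insert a L - {b}))
    = f L + (\<Sum>b | b \<in> removable_cells L \<and> a \<in> addable_cells (L - {b}) \<and> a \<noteq> b. f (insert a (L - {b})))"
proof -
  have "(\<Sum>b\<in>removable_cells (insert a L). f (insert a L - {b}))
      = f (insert a L - {a}) + (\<Sum>b\<in>removable_cells (insert a L) - {a}. f (insert a L - {b}))"
    by (rule sum.remove[OF finite_removable_cells[OF young_insert_addable[OF assms(2)]]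
          addable_imp_removable_insert[OF assms]])
  also have "insert a L - {a} = L"
    using assms(2) by (auto simp: addable_cells_def)
  also have "removable_cells (insert a L) - {a}
      = {b. b \<in> removable_cells L \<and> a \<in> addable_cells (L - {b}) \<and> a \<noteq> b}"
    using removable_insert_iff[OF assms] by auto
  also have "(\<Sum>b\<in>\<dots>. f (insert a L - {b})) = (\<Sum>b\<in>\<dots>. f (insert a (L - {b})))"
    by (rule sum.cong) (auto intro!: arg_cong[where f = f])
  finally show ?thesis .
qed

lemma sum_addable_remove:
  assumes "young L" "b \<in> removable_cells L"
  shows "(\<Sum>a\<in>addable_cells (L - {b}). f (insert a (L - {b})))
    = f L + (\<Sum>a | a \<in> addable_cells L \<and> a \<in> addable_cells (L - {b}) \<and> a \<noteq> b. f (insert a (L - {b})))"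
proof -
  have "(\<Sum>a\<in>addable_cells (L - {b}). f (insert a (L - {b})))
      = f (insert b (L - {b})) + (\<Sum>a\<in>addable_cells (L - {b}) - {b}. f (insert a (L - {b})))"
    by (rule sum.remove[OF finite_addable_cells[OF young_remove_removable[OF assms(2)]]
          removable_imp_addable_remove[OF assms]])
  also have "insert b (L - {b}) = L"
    using assms(2) by (auto simp: removable_cells_def)
  also have "addable_cells (L - {b}) - {b} = {a. a \<in> addable_cells L \<and> a \<in> addable_cells (L - {b}) \<and> a \<noteq> b}"
    using addable_of_addable_remove[OF assms] by auto
  finally show ?thesis .
qed

text \<open>The relation D^i U = U D^i + i D^(i-1) of Young's lattice, counted on paths starting at L.\<close>

lemma sum_down_paths_insert_addable:
  assumes "young L"
  shows "(\<Sum>a\<in>addable_cells L. down_paths i (insert a L))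
    = down_paths (Suc i) L + down_paths i L + i * down_paths (i - 1) L"
  using assms
proof (induction i arbitrary: L)
  case 0
  then show ?case using card_addable_cells by simp
next
  case (Suc i)
  let ?A = "addable_cells L" and ?B = "removable_cells L"
  define commute where "commute = (\<lambda>a b. a \<in> addable_cells (L - {b}) \<and> a \<noteq> b)"
  define h where "h = (\<lambda>a b. down_paths i (insert a (L - {b})))"
  have "(\<Sum>a\<in>?A. down_paths (Suc i) (insert a L))
      = (\<Sum>a\<in>?A. down_paths i L + (\<Sum>b\<in>{b\<in>?B. commute a b}. h a b))"
    by (intro sum.cong refl) (simp add: sum_removable_insert[OF Suc.prems] commute_def h_def)
  also have "\<dots> = card ?A * down_paths i L + (\<Sum>b\<in>?B. \<Sum>a\<in>{a\<in>?A. commute a b}. h a b)"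
    by (simp add: sum.distrib sum.swap_restrict[OF finite_addable_cells finite_removable_cells] Suc.prems)
  finally have up_down: "(\<Sum>a\<in>?A. down_paths (Suc i) (insert a L))
      = card ?A * down_paths i L + (\<Sum>b\<in>?B. \<Sum>a\<in>{a\<in>?A. commute a b}. h a b)" .
  have "card ?B * down_paths i L + (\<Sum>b\<in>?B. \<Sum>a\<in>{a\<in>?A. commute a b}. h a b)
      = (\<Sum>b\<in>?B. \<Sum>a\<in>addable_cells (L - {b}). h a b)"
    by (simp add: sum_addable_remove[OF Suc.prems] commute_def h_def sum.distrib)
  also have "\<dots> = (\<Sum>b\<in>?B. down_paths (Suc i) (L - {b}) + down_paths i (L - {b})
      + i * down_paths (i - 1) (L - {b}))"
    using Suc.IH[OF young_remove_removable] by (simp add: h_def)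
  also have "\<dots> = down_paths (Suc (Suc i)) L + down_paths (Suc i) L + i * down_paths i L"
    by (cases i) (simp_all add: sum.distrib sum_distrib_left sum_Suc)
  finally show ?case
    using up_down card_addable_cells[OF Suc.prems] by (simp add: algebra_simps)
qed

fun up_paths :: "nat \<Rightarrow> (nat \<times> nat) set \<Rightarrow> nat" where
  "up_paths 0 L = 1"
| "up_paths (Suc m) L = (\<Sum>a\<in>addable_cells L. up_paths m (insert a L))"

section \<open>Involutions\<close>

definition involutions :: "'a set \<Rightarrow> ('a \<Rightarrow> 'a) set" where
  "involutions S = {p. p permutes S \<and> p \<circ> p = id}"

lemma involutions_iff: "p \<in> involutions S \<longleftrightarrow> (\<forall>x. x \<notin> S \<longrightarrow> p x = x) \<and> (\<forall>x. p (p x) = x)"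
proof
  assume "p \<in> involutions S"
  then show "(\<forall>x. x \<notin> S \<longrightarrow> p x = x) \<and> (\<forall>x. p (p x) = x)"
    by (auto simp: involutions_def permutes_def fun_eq_iff)
next
  assume p: "(\<forall>x. x \<notin> S \<longrightarrow> p x = x) \<and> (\<forall>x. p (p x) = x)"
  then have "\<exists>!x. p x = y" for y
    by metis
  with p show "p \<in> involutions S"
    by (simp add: involutions_def permutes_def fun_eq_iff)
qed

lemma finite_involutions: "finite S \<Longrightarrow> finite (involutions S)"
  unfolding involutions_def by (rule finite_subset[OF _ finite_permutations]) auto

lemma involutions_fixing:
  "x \<in> S \<Longrightarrow> {p \<in> involutions S. p x = x} = involutions (S - {x})"
  by (auto simp: involutions_iff)

lemma involutions_swapping:
  assumes "x \<in> S" "y \<in> S" "x \<noteq> y"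
  shows "{p \<in> involutions S. p x = y} = (\<lambda>g. transpose x y \<circ> g) ` involutions (S - {x, y})"
proof (intro equalityI subsetI)
  fix p assume "p \<in> {p \<in> involutions S. p x = y}"
  then have p: "\<forall>z. z \<notin> S \<longrightarrow> p z = z" "\<forall>z. p (p z) = z" "p x = y"
    by (auto simp: involutions_iff)
  then have "transpose x y \<circ> p \<in> involutions (S - {x, y})"
    unfolding involutions_iff by (auto simp: transpose_def) metis+
  moreover have "p = transpose x y \<circ> (transpose x y \<circ> p)"
    by (simp add: fun_eq_iff)
  ultimately show "p \<in> (\<lambda>g. transpose x y \<circ> g) ` involutions (S - {x, y})"
    by blast
next
  fix p assume "p \<in> (\<lambda>g. transpose x y \<circ> g) ` involutions (S - {x, y})"
  then obtain g where g: "\<forall>z. z \<notin> S - {x, y} \<longrightarrow> g z = z" "\<forall>z. g (g z) = z"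
    and p: "p = transpose x y \<circ> g"
    by (auto simp: involutions_iff)
  then show "p \<in> {p \<in> involutions S. p x = y}"
    using assms unfolding involutions_iff by (auto simp: transpose_def)
qed

lemma card_involutions_remove:
  assumes "finite S" "x \<in> S"
  shows "card (involutions S)
    = card (involutions (S - {x})) + (\<Sum>y\<in>S - {x}. card (involutions (S - {x, y})))"
proof -
  have image_x: "p x \<in> S" if "p \<in> involutions S" for p
    using that assms(2) by (metis involutions_iff)
  have fin: "finite (involutions S)"
    using finite_involutions[OF assms(1)] .
  have "involutions S = {p \<in> involutions S. p x = x} \<union> (\<Union>y\<in>S - {x}. {p \<in> involutions S. p x = y})"
    using image_x by blast
  then have "card (involutions S)
      = card {p \<in> involutions S. p x = x} + card (\<Union>y\<in>S - {x}. {p \<in> involutions S. p x = y})"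
    using fin finite_subset[OF _ fin] by (subst card_Un_disjoint[symmetric]) auto
  also have "card (\<Union>y\<in>S - {x}. {p \<in> involutions S. p x = y})
      = (\<Sum>y\<in>S - {x}. card {p \<in> involutions S. p x = y})"
    using assms(1) fin by (intro card_UN_disjoint) auto
  also have "(\<Sum>y\<in>S - {x}. card {p \<in> involutions S. p x = y})
      = (\<Sum>y\<in>S - {x}. card (involutions (S - {x, y})))"
  proof (rule sum.cong[OF refl])
    fix y assume y: "y \<in> S - {x}"
    have "inj (\<lambda>g. transpose x y \<circ> g)"
      by (rule injI) (metis comp_assoc transpose_comp_involutory id_comp)
    have "card {p \<in> involutions S. p x = y} = card ((\<lambda>g. transpose x y \<circ> g) ` involutions (S - {x, y}))"
      using involutions_swapping[OF assms(2), of y] y by auto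
    also have "\<dots> = card (involutions (S - {x, y}))"
      by (rule card_image[OF inj_on_subset[OF \<open>inj (\<lambda>g. transpose x y \<circ> g)\<close>]]) simp
    finally show "card {p \<in> involutions S. p x = y} = card (involutions (S - {x, y}))" .
  qed
  finally show ?thesis
    using involutions_fixing[OF assms(2)] by simp
qed

text \<open>Stated for sets of naturals because the induction hypothesis is also applied to \<open>{..<Suc n}\<close>.\<close>

lemma card_involutions: "finite (S :: nat set) \<Longrightarrow> card (involutions S) = num_involutions (card S)"
proof (induction "card S" arbitrary: S rule: less_induct)
  case less
  show ?case
  proof (cases "card S")
    case 0
    then have "S = {}" using less.prems by simp
    then show ?thesis by (simp add: num_involutions_def involutions_def Collect_conv_if)
  next
    case (Suc n)
    have recurrence: "card (involutions T) = num_involutions n + n * num_involutions (n - 1)"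
      if T: "finite T" "card T = Suc n" "x \<in> T" for T :: "nat set" and x
    proof -
      have "card (involutions (T - {x, y})) = num_involutions (n - 1)" if "y \<in> T - {x}" for y
        using less.hyps[of "T - {x, y}"] T that Suc by (simp add: card_Diff_subset)
      moreover have "card (involutions (T - {x})) = num_involutions n"
        using less.hyps[of "T - {x}"] T Suc by simp
      ultimately show ?thesis
        using card_involutions_remove[OF T(1,3)] T by simp
    qed
    obtain x where "x \<in> S"
      using Suc by (metis card.empty ex_in_conv nat.distinct(1))
    then have "card (involutions S) = card (involutions {..<Suc n})"
      using recurrence[of S x] recurrence[of "{..<Suc n}" n] less.prems Suc by simp
    then show ?thesis
      using Suc by (simp add: num_involutions_def involutions_def)
  qed
qed

lemma num_involutions_Suc: "num_involutions (Suc n) = num_involutions n + n * num_involutions (n - 1)"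
proof -
  have "num_involutions (Suc n)
      = card (involutions {..<n}) + (\<Sum>y\<in>{..<n}. card (involutions ({..<n} - {y})))"
    using card_involutions_remove[of "{..<Suc n}" n]
    by (simp add: num_involutions_def involutions_def[symmetric] lessThan_Suc insert_Diff_if)
  also have "\<dots> = num_involutions n + n * num_involutions (n - 1)"
    by (simp add: card_involutions)
  finally show ?thesis .
qed

definition up_down_coeff :: "nat \<Rightarrow> nat \<Rightarrow> nat" where
  "up_down_coeff m i = (m choose i) * num_involutions (m - i)"

lemma up_down_coeff_Suc:
  "up_down_coeff (Suc m) i
    = (if i = 0 then 0 else up_down_coeff m (i - 1)) + up_down_coeff m i + Suc i * up_down_coeff m (Suc i)"
proof (cases i)
  case 0
  then show ?thesis
    by (simp add: up_down_coeff_def num_involutions_Suc)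
next
  case (Suc j)
  show ?thesis
  proof (cases "j < m")
    case True
    define q where "q = m - Suc j"
    have q: "m - j = Suc q" "m - Suc j = q" "m - Suc (Suc j) = q - 1"
      using True by (simp_all add: q_def)
    have "up_down_coeff (Suc m) i = ((m choose j) + (m choose Suc j)) * num_involutions (Suc q)"
      using Suc q by (simp add: up_down_coeff_def)
    also have "\<dots> = (m choose j) * num_involutions (Suc q) + (m choose Suc j) * num_involutions q
        + ((m choose Suc j) * q) * num_involutions (q - 1)"
      by (simp add: num_involutions_Suc algebra_simps)
    also have "(m choose Suc j) * q = Suc (Suc j) * (m choose Suc (Suc j))"
      unfolding q_def by (metis binomial_absorb_comp binomial_absorption mult.commute)
    finally show ?thesis
      using Suc q by (simp add: up_down_coeff_def algebra_simps)
  next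
    case False
    then show ?thesis
      using Suc by (simp add: up_down_coeff_def binomial_eq_0)
  qed
qed

lemma sum_up_down_coeff_Suc:
  "(\<Sum>i\<le>m. up_down_coeff m i * (d (Suc i) + d i + i * d (i - 1)))
    = (\<Sum>i\<le>Suc m. up_down_coeff (Suc m) i * d i)"
proof -
  have vanish: "up_down_coeff m (Suc m) = 0" "up_down_coeff m (Suc (Suc m)) = 0"
    by (simp_all add: up_down_coeff_def)
  have "(\<Sum>i\<le>Suc m. up_down_coeff (Suc m) i * d i)
      = (\<Sum>i\<le>Suc m. (if i = 0 then 0 else up_down_coeff m (i - 1)) * d i)
        + (\<Sum>i\<le>Suc m. up_down_coeff m i * d i) + (\<Sum>i\<le>Suc m. Suc i * up_down_coeff m (Suc i) * d i)"
    by (simp add: up_down_coeff_Suc sum.distrib algebra_simps)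
  also have "(\<Sum>i\<le>Suc m. (if i = 0 then 0 else up_down_coeff m (i - 1)) * d i)
      = (\<Sum>i\<le>m. up_down_coeff m i * d (Suc i))"
    by (subst sum.atMost_Suc_shift) simp
  also have "(\<Sum>i\<le>Suc m. Suc i * up_down_coeff m (Suc i) * d i)
      = (\<Sum>i\<le>Suc m. i * up_down_coeff m i * d (i - 1))"
    using vanish by (subst (2) sum.atMost_Suc_shift) simp
  finally show ?thesis
    using vanish by (simp add: sum.distrib algebra_simps)
qed

lemma up_paths_eq_sum_down_paths:
  "young L \<Longrightarrow> up_paths m L = (\<Sum>i\<le>m. up_down_coeff m i * down_paths i L)"
proof (induction m arbitrary: L)
  case 0
  then show ?case by (simp add: up_down_coeff_def num_involutions_def involutions_def Collect_conv_if)
next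
  case (Suc m)
  have "up_paths (Suc m) L = (\<Sum>a\<in>addable_cells L. \<Sum>i\<le>m. up_down_coeff m i * down_paths i (insert a L))"
    using Suc.IH young_insert_addable by simp
  also have "\<dots> = (\<Sum>i\<le>m. up_down_coeff m i * (\<Sum>a\<in>addable_cells L. down_paths i (insert a L)))"
    by (simp add: sum.swap[of _ "addable_cells L"] sum_distrib_left)
  also have "\<dots> = (\<Sum>i\<le>m. up_down_coeff m i * (down_paths (Suc i) L + down_paths i L + i * down_paths (i - 1) L))"
    by (simp add: sum_down_paths_insert_addable[OF Suc.prems])
  also have "\<dots> = (\<Sum>i\<le>Suc m. up_down_coeff (Suc m) i * down_paths i L)"
    by (rule sum_up_down_coeff_Suc)
  finally show ?case .
qed

section \<open>Standard skew tableaux\<close>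

lemma skew_syt_range: "skew_syt \<nu> \<mu> S \<Longrightarrow> c \<in> \<nu> - \<mu> \<Longrightarrow> S c \<in> {1..card (\<nu> - \<mu>)}"
  unfolding skew_syt_def bij_betw_def by auto

lemma skew_syt_zero: "skew_syt \<nu> \<mu> S \<Longrightarrow> c \<notin> \<nu> - \<mu> \<Longrightarrow> S c = 0"
  unfolding skew_syt_def by blast

lemma skew_syt_mono:
  "skew_syt \<nu> \<mu> S \<Longrightarrow> (i, j) \<in> \<nu> - \<mu> \<Longrightarrow> (i', j') \<in> \<nu> - \<mu> \<Longrightarrow> i \<le> i' \<Longrightarrow> j \<le> j'
    \<Longrightarrow> S (i, j) \<le> S (i', j')"
  unfolding skew_syt_def by blast

lemma finite_skew_syt: "finite (\<nu> - \<mu>) \<Longrightarrow> finite {S. skew_syt \<nu> \<mu> S}"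
proof -
  assume fin: "finite (\<nu> - \<mu>)"
  have "{S. skew_syt \<nu> \<mu> S}
      \<subseteq> {S. \<forall>c. (c \<in> \<nu> - \<mu> \<longrightarrow> S c \<in> {1..card (\<nu> - \<mu>)}) \<and> (c \<notin> \<nu> - \<mu> \<longrightarrow> S c = 0)}"
    using skew_syt_range skew_syt_zero by blast
  then show ?thesis
    using finite_set_of_finite_funs[OF fin, of "{1..card (\<nu> - \<mu>)}" 0] finite_subset by blast
qed

lemma bij_betw_fun_upd_max_iff:
  assumes "b \<notin> A"
  shows "bij_betw (S(b := Suc m)) (insert b A) {1..Suc m} \<longleftrightarrow> bij_betw S A {1..m}"
proof -
  have "bij_betw S A {1..m} \<longleftrightarrow> bij_betw (S(b := Suc m)) A {1..m}"
    using assms by (intro bij_betw_cong) auto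
  also have "\<dots> \<longleftrightarrow> bij_betw (S(b := Suc m)) (A \<union> {b}) ({1..m} \<union> {Suc m})"
    using notIn_Un_bij_betw3[of b A "S(b := Suc m)" "{1..m}"] assms by simp
  finally show ?thesis by (simp add: atLeastAtMostSuc_conv)
qed

lemma skew_syt_fun_upd_max_iff:
  assumes b: "b \<in> \<nu> - \<mu>" and young_minus: "young (\<nu> - {b})"
    and card: "card (\<nu> - \<mu>) = Suc m" and "S b = 0"
  shows "skew_syt \<nu> \<mu> (S(b := Suc m)) \<longleftrightarrow> skew_syt (\<nu> - {b}) \<mu> S"
proof -
  have cells: "\<nu> - \<mu> = insert b (\<nu> - {b} - \<mu>)" "b \<notin> \<nu> - {b} - \<mu>"
    using b by auto
  have "\<nu> - {b} - \<mu> = (\<nu> - \<mu>) - {b}"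
    by blast
  then have card_minus: "card (\<nu> - {b} - \<mu>) = m"
    using card b by (simp add: card_Diff_singleton)
  have bij: "bij_betw (S(b := Suc m)) (\<nu> - \<mu>) {1..Suc m} \<longleftrightarrow> bij_betw S (\<nu> - {b} - \<mu>) {1..m}"
    using bij_betw_fun_upd_max_iff[OF cells(2)] cells(1) by simp
  have zero: "(\<forall>c. c \<notin> \<nu> - \<mu> \<longrightarrow> (S(b := Suc m)) c = 0) \<longleftrightarrow> (\<forall>c. c \<notin> \<nu> - {b} - \<mu> \<longrightarrow> S c = 0)"
    using b \<open>S b = 0\<close> by auto
  have b_maximal: "c = b" if "c \<in> \<nu> - \<mu>" "fst b \<le> fst c" "snd b \<le> snd c" for c
    using young_downclosed[OF young_minus, of "fst c" "snd c" "fst b" "snd b"] that by auto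
  show ?thesis
  proof
    assume "skew_syt \<nu> \<mu> (S(b := Suc m))"
    then show "skew_syt (\<nu> - {b}) \<mu> S"
      unfolding skew_syt_def card card_minus bij zero
      by (metis (no_types, lifting) Diff_iff fun_upd_other insertCI cells(1))
  next
    assume S: "skew_syt (\<nu> - {b}) \<mu> S"
    have "S c \<le> m" for c
      using skew_syt_range[OF S, of c] skew_syt_zero[OF S, of c] card_minus
      by (cases "c \<in> \<nu> - {b} - \<mu>") auto
    then have "(S(b := Suc m)) (i, j) \<le> (S(b := Suc m)) (i', j')"
      if "(i, j) \<in> \<nu> - \<mu>" "(i', j') \<in> \<nu> - \<mu>" "i \<le> i'" "j \<le> j'" for i j i' j'
      using that b_maximal[of "(i', j')"] S unfolding skew_syt_def
      by (cases "(i, j) = b"; cases "(i', j') = b") (auto simp: le_SucI)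
    then show "skew_syt \<nu> \<mu> (S(b := Suc m))"
      using S unfolding skew_syt_def card card_minus bij zero by auto
  qed
qed

lemma skew_syt_remove_max:
  assumes "young \<nu>" "young \<mu>" and card: "card (\<nu> - \<mu>) = Suc m" and S: "skew_syt \<nu> \<mu> S"
  obtains b where "b \<in> removable_cells \<nu> - \<mu>" "S b = Suc m" "skew_syt (\<nu> - {b}) \<mu> (S(b := 0))"
proof -
  have bij: "bij_betw S (\<nu> - \<mu>) {1..Suc m}"
    using S card by (simp add: skew_syt_def)
  then have "Suc m \<in> S ` (\<nu> - \<mu>)"
    by (simp add: bij_betw_def)
  then obtain i j where b: "(i, j) \<in> \<nu> - \<mu>" "S (i, j) = Suc m"
    by auto
  have maximal: "(i', j') = (i, j)" if "(i', j') \<in> \<nu>" "i \<le> i'" "j \<le> j'" for i' j'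
  proof -
    have c: "(i', j') \<in> \<nu> - \<mu>"
      using young_downclosed[OF assms(2), of i' j' i j] b(1) that by blast
    have "S (i, j) \<le> S (i', j')"
      using skew_syt_mono[OF S b(1) c] that by blast
    moreover have "S (i', j') \<le> Suc m"
      using skew_syt_range[OF S c] card by simp
    ultimately have "S (i', j') = S (i, j)"
      using b(2) by simp
    then show ?thesis
      using bij b(1) c by (metis bij_betw_imp_inj_on inj_onD)
  qed
  then have "(Suc i, j) \<notin> \<nu>" "(i, Suc j) \<notin> \<nu>"
    by fastforce+
  then have young_minus: "young (\<nu> - {(i, j)})"
    using young_remove_iff[OF assms(1)] b(1) by blast
  have "skew_syt (\<nu> - {(i, j)}) \<mu> (S((i, j) := 0))"
    using skew_syt_fun_upd_max_iff[OF b(1) young_minus card, of "S((i, j) := 0)"] S b(2)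
    by (simp add: fun_upd_idem)
  then show ?thesis
    using that[of "(i, j)"] b young_minus by (simp add: removable_cells_def)
qed

lemma skew_syt_decomp_max:
  assumes "young \<nu>" "young \<mu>" "card (\<nu> - \<mu>) = Suc m"
  shows "{S. skew_syt \<nu> \<mu> S}
    = (\<Union>b\<in>removable_cells \<nu> - \<mu>. (\<lambda>S. S(b := Suc m)) ` {S. skew_syt (\<nu> - {b}) \<mu> S})"
proof (intro equalityI subsetI)
  fix S assume "S \<in> {S. skew_syt \<nu> \<mu> S}"
  then obtain b where "b \<in> removable_cells \<nu> - \<mu>" "S b = Suc m" "skew_syt (\<nu> - {b}) \<mu> (S(b := 0))"
    using skew_syt_remove_max[OF assms] by blast
  then show "S \<in> (\<Union>b\<in>removable_cells \<nu> - \<mu>. (\<lambda>S. S(b := Suc m)) ` {S. skew_syt (\<nu> - {b}) \<mu> S})"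
    by (intro UN_I image_eqI[of S _ "S(b := 0)"]) auto
next
  fix S assume "S \<in> (\<Union>b\<in>removable_cells \<nu> - \<mu>. (\<lambda>S. S(b := Suc m)) ` {S. skew_syt (\<nu> - {b}) \<mu> S})"
  then obtain b S' where b: "b \<in> removable_cells \<nu> - \<mu>" and S': "skew_syt (\<nu> - {b}) \<mu> S'"
    and "S = S'(b := Suc m)"
    by blast
  moreover have "S' b = 0"
    using skew_syt_zero[OF S'] by simp
  ultimately show "S \<in> {S. skew_syt \<nu> \<mu> S}"
    using skew_syt_fun_upd_max_iff[of b \<nu> \<mu> m S'] assms(3) by (auto simp: removable_cells_def)
qed

lemma card_UN_fun_upd_image:
  assumes "finite B" "\<And>b. b \<in> B \<Longrightarrow> finite (F b)"
    and "\<And>b S. b \<in> B \<Longrightarrow> S \<in> F b \<Longrightarrow> S b = z"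
    and "\<And>b b' S. b \<in> B \<Longrightarrow> b' \<in> B \<Longrightarrow> b \<noteq> b' \<Longrightarrow> S \<in> F b' \<Longrightarrow> S b \<noteq> v"
  shows "card (\<Union>b\<in>B. (\<lambda>S. S(b := v)) ` F b) = (\<Sum>b\<in>B. card (F b))"
proof -
  have "card (\<Union>b\<in>B. (\<lambda>S. S(b := v)) ` F b) = (\<Sum>b\<in>B. card ((\<lambda>S. S(b := v)) ` F b))"
  proof (rule card_UN_disjoint)
    show "\<forall>b\<in>B. \<forall>b'\<in>B. b \<noteq> b' \<longrightarrow> (\<lambda>S. S(b := v)) ` F b \<inter> (\<lambda>S. S(b' := v)) ` F b' = {}"
    proof (intro ballI impI)
      fix b b' assume "b \<in> B" "b' \<in> B" "b \<noteq> b'"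
      have "S(b := v) \<noteq> S'(b' := v)" if "S' \<in> F b'" for S S'
        using assms(4)[OF \<open>b \<in> B\<close> \<open>b' \<in> B\<close> \<open>b \<noteq> b'\<close> that] \<open>b \<noteq> b'\<close>
        by (metis fun_upd_apply)
      then show "(\<lambda>S. S(b := v)) ` F b \<inter> (\<lambda>S. S(b' := v)) ` F b' = {}"
        by blast
    qed
  qed (use assms(1,2) in auto)
  also have "\<dots> = (\<Sum>b\<in>B. card (F b))"
  proof (rule sum.cong[OF refl], rule card_image, rule inj_onI)
    fix b S S' assume "b \<in> B" "S \<in> F b" "S' \<in> F b" "S(b := v) = S'(b := v)"
    then show "S = S'"
      using assms(3) by (metis fun_upd_triv fun_upd_upd)
  qed
  finally show ?thesis .
qed

lemma skew_f_remove_corner: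
  assumes "young \<nu>" "young \<mu>" "card \<mu> < card \<nu>"
  shows "skew_f \<nu> \<mu> = (\<Sum>b\<in>removable_cells \<nu>. skew_f (\<nu> - {b}) \<mu>)"
proof (cases "\<mu> \<subseteq> \<nu>")
  case False
  then have "\<not> \<mu> \<subseteq> \<nu> - {b}" for b
    by blast
  with False show ?thesis
    by (simp add: skew_f_def)
next
  case True
  then have "card (\<nu> - \<mu>) = card \<nu> - card \<mu>"
    using card_Diff_subset finite_subset young_finite[OF assms(1)] by metis
  then obtain m where card: "card (\<nu> - \<mu>) = Suc m"
    using assms(3) by (metis Suc_diff_Suc zero_less_diff)
  have "skew_f \<nu> \<mu> = card {S. skew_syt \<nu> \<mu> S}"
    using True by (simp add: skew_f_def)
  also have "\<dots> = (\<Sum>b\<in>removable_cells \<nu> - \<mu>. card {S. skew_syt (\<nu> - {b}) \<mu> S})"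
    unfolding skew_syt_decomp_max[OF assms(1,2) card]
  proof (rule card_UN_fun_upd_image)
    show "finite (removable_cells \<nu> - \<mu>)"
      using finite_removable_cells[OF assms(1)] by simp
    show "finite {S. skew_syt (\<nu> - {b}) \<mu> S}" for b
      using young_finite[OF assms(1)] by (simp add: finite_skew_syt)
    show "S b = 0" if "S \<in> {S. skew_syt (\<nu> - {b}) \<mu> S}" for b S
      using skew_syt_zero that by simp
    show "S b \<noteq> Suc m" if "b \<in> removable_cells \<nu> - \<mu>" "b' \<in> removable_cells \<nu> - \<mu>" "b \<noteq> b'"
      and "S \<in> {S. skew_syt (\<nu> - {b'}) \<mu> S}" for b b' S
    proof -
      have "card (\<nu> - {b'} - \<mu>) = m"
        using card that(2) by (simp add: removable_cells_def Diff_insert2[symmetric])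
      then show ?thesis
        using skew_syt_range[of "\<nu> - {b'}" \<mu> S b] that by (auto simp: removable_cells_def)
    qed
  qed
  also have "\<dots> = (\<Sum>b\<in>removable_cells \<nu>. skew_f (\<nu> - {b}) \<mu>)"
    using True finite_removable_cells[OF assms(1)]
    by (intro sum.mono_neutral_cong_left) (auto simp: skew_f_def removable_cells_def)
  finally show ?thesis .
qed

lemma skew_f_same_card:
  assumes "young \<nu>" "card \<mu> = card \<nu>"
  shows "skew_f \<nu> \<mu> = of_bool (\<nu> = \<mu>)"
proof (cases "\<nu> = \<mu>")
  case True
  then have "{S. skew_syt \<nu> \<mu> S} = {\<lambda>_. 0}"
    unfolding skew_syt_def by (auto simp: bij_betw_def)
  then show ?thesis
    using True by (simp add: skew_f_def)
next
  case False
  then have "\<not> \<mu> \<subseteq> \<nu>"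
    using assms card_subset_eq young_finite by blast
  then show ?thesis
    using False by (simp add: skew_f_def)
qed

lemma removable_remove_eq_iff_addable_insert_eq:
  assumes "young \<nu>" "young \<mu>"
  shows "b \<in> removable_cells \<nu> \<and> \<nu> - {b} = \<mu> \<longleftrightarrow> b \<in> addable_cells \<mu> \<and> insert b \<mu> = \<nu>"
  using assms unfolding removable_cells_def addable_cells_def by (auto simp: insert_absorb)

text \<open>The cell holding the smallest entry is addable to \<open>\<mu>\<close>.  Instead of a second bijection, this is
  derived from skew_f_remove_corner by induction on \<open>card \<nu> - card \<mu>\<close>.\<close>

lemma skew_f_add_corner:
  assumes "young \<nu>" "young \<mu>" "card \<mu> < card \<nu>"
  shows "skew_f \<nu> \<mu> = (\<Sum>a\<in>addable_cells \<mu>. skew_f \<nu> (insert a \<mu>))"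
proof -
  obtain d where "card \<nu> = card \<mu> + Suc d"
    using assms(3) less_iff_Suc_add by auto
  with assms(1) show ?thesis
  proof (induction d arbitrary: \<nu>)
    case 0
    have "skew_f \<nu> \<mu> = (\<Sum>b\<in>removable_cells \<nu>. skew_f (\<nu> - {b}) \<mu>)"
      using skew_f_remove_corner[OF 0(1) assms(2)] 0(2) by simp
    also have "\<dots> = (\<Sum>b\<in>removable_cells \<nu>. of_bool (\<nu> - {b} = \<mu>))"
    proof (rule sum.cong[OF refl])
      fix b assume b: "b \<in> removable_cells \<nu>"
      show "skew_f (\<nu> - {b}) \<mu> = of_bool (\<nu> - {b} = \<mu>)"
        using skew_f_same_card[OF young_remove_removable[OF b]] card_remove_removable[OF 0(1) b] 0(2)
        by simp
    qed
    also have "\<dots> = card (removable_cells \<nu> \<inter> {b. \<nu> - {b} = \<mu>})"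
      using finite_removable_cells[OF 0(1)] by simp
    also have "removable_cells \<nu> \<inter> {b. \<nu> - {b} = \<mu>} = addable_cells \<mu> \<inter> {a. insert a \<mu> = \<nu>}"
      using removable_remove_eq_iff_addable_insert_eq[OF 0(1) assms(2)] by blast
    also have "card \<dots> = (\<Sum>a\<in>addable_cells \<mu>. of_bool (insert a \<mu> = \<nu>))"
      using finite_addable_cells[OF assms(2)] by simp
    also have "\<dots> = (\<Sum>a\<in>addable_cells \<mu>. skew_f \<nu> (insert a \<mu>))"
    proof (rule sum.cong[OF refl])
      fix a assume a: "a \<in> addable_cells \<mu>"
      show "of_bool (insert a \<mu> = \<nu>) = skew_f \<nu> (insert a \<mu>)"
        using skew_f_same_card[OF 0(1)] card_insert_addable[OF assms(2) a] 0(2) by auto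
    qed
    finally show ?case .
  next
    case (Suc d)
    have "skew_f \<nu> \<mu> = (\<Sum>b\<in>removable_cells \<nu>. skew_f (\<nu> - {b}) \<mu>)"
      using skew_f_remove_corner[OF Suc.prems(1) assms(2)] Suc.prems(2) by simp
    also have "\<dots> = (\<Sum>b\<in>removable_cells \<nu>. \<Sum>a\<in>addable_cells \<mu>. skew_f (\<nu> - {b}) (insert a \<mu>))"
      using Suc.IH young_remove_removable card_remove_removable[OF Suc.prems(1)] Suc.prems(2)
      by (intro sum.cong) auto
    also have "\<dots> = (\<Sum>a\<in>addable_cells \<mu>. \<Sum>b\<in>removable_cells \<nu>. skew_f (\<nu> - {b}) (insert a \<mu>))"
      by (rule sum.swap)
    also have "\<dots> = (\<Sum>a\<in>addable_cells \<mu>. skew_f \<nu> (insert a \<mu>))"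
      using skew_f_remove_corner[OF Suc.prems(1) young_insert_addable] card_insert_addable[OF assms(2)]
        Suc.prems(2)
      by (intro sum.cong) auto
    finally show ?case .
  qed
qed

lemma sum_skew_f_eq_up_paths:
  assumes "young L"
  shows "(\<Sum>\<nu>\<in>young_diagrams (card L + m). skew_f \<nu> L) = up_paths m L"
  using assms
proof (induction m arbitrary: L)
  case 0
  then have "(\<Sum>\<nu>\<in>young_diagrams (card L). skew_f \<nu> L) = (\<Sum>\<nu>\<in>young_diagrams (card L). of_bool (\<nu> = L))"
    by (intro sum.cong) (auto simp: young_diagrams_def skew_f_same_card)
  also have "\<dots> = 1"
    using 0 finite_young_diagrams by (simp add: young_diagrams_def Int_def Collect_conv_if)
  finally show ?case by simp
next
  case (Suc m)
  have "(\<Sum>\<nu>\<in>young_diagrams (card L + Suc m). skew_f \<nu> L)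
      = (\<Sum>\<nu>\<in>young_diagrams (card L + Suc m). \<Sum>a\<in>addable_cells L. skew_f \<nu> (insert a L))"
    using skew_f_add_corner Suc.prems by (intro sum.cong) (auto simp: young_diagrams_def)
  also have "\<dots> = (\<Sum>a\<in>addable_cells L. \<Sum>\<nu>\<in>young_diagrams (card L + Suc m). skew_f \<nu> (insert a L))"
    by (rule sum.swap)
  also have "\<dots> = (\<Sum>a\<in>addable_cells L. up_paths m (insert a L))"
  proof (rule sum.cong[OF refl])
    fix a assume a: "a \<in> addable_cells L"
    show "(\<Sum>\<nu>\<in>young_diagrams (card L + Suc m). skew_f \<nu> (insert a L)) = up_paths m (insert a L)"
      using Suc.IH[OF young_insert_addable[OF a]] card_insert_addable[OF Suc.prems a] by simp
  qed
  finally show ?case by simp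
qed

lemma sum_skew_f_eq_down_paths:
  assumes "young L" "i \<le> card L"
  shows "(\<Sum>\<mu>\<in>young_diagrams (card L - i). skew_f L \<mu>) = down_paths i L"
  using assms
proof (induction i arbitrary: L)
  case 0
  then have "(\<Sum>\<mu>\<in>young_diagrams (card L). skew_f L \<mu>) = (\<Sum>\<mu>\<in>young_diagrams (card L). of_bool (L = \<mu>))"
    by (intro sum.cong) (auto simp: young_diagrams_def skew_f_same_card)
  also have "\<dots> = 1"
    using 0 finite_young_diagrams by (simp add: young_diagrams_def Int_def Collect_conv_if)
  finally show ?case by simp
next
  case (Suc i)
  have "(\<Sum>\<mu>\<in>young_diagrams (card L - Suc i). skew_f L \<mu>)
      = (\<Sum>\<mu>\<in>young_diagrams (card L - Suc i). \<Sum>b\<in>removable_cells L. skew_f (L - {b}) \<mu>)"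
    using skew_f_remove_corner Suc.prems by (intro sum.cong) (auto simp: young_diagrams_def)
  also have "\<dots> = (\<Sum>b\<in>removable_cells L. \<Sum>\<mu>\<in>young_diagrams (card L - Suc i). skew_f (L - {b}) \<mu>)"
    by (rule sum.swap)
  also have "\<dots> = (\<Sum>b\<in>removable_cells L. down_paths i (L - {b}))"
  proof (rule sum.cong[OF refl])
    fix b assume b: "b \<in> removable_cells L"
    have "card (L - {b}) - i = card L - Suc i" "i \<le> card (L - {b})"
      using card_remove_removable[OF Suc.prems(1) b] Suc.prems(2) by auto
    then show "(\<Sum>\<mu>\<in>young_diagrams (card L - Suc i). skew_f (L - {b}) \<mu>) = down_paths i (L - {b})"
      using Suc.IH[OF young_remove_removable[OF b]] by simp
  qed
  finally show ?case by simp
qed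

lemma down_paths_eq_0: "young L \<Longrightarrow> card L < i \<Longrightarrow> down_paths i L = 0"
proof (induction i arbitrary: L)
  case (Suc i)
  have "down_paths i (L - {b}) = 0" if b: "b \<in> removable_cells L" for b
  proof -
    have "card L > 0"
      using b young_finite[OF Suc.prems(1)] by (auto simp: removable_cells_def card_gt_0_iff)
    then show ?thesis
      using Suc.IH[OF young_remove_removable[OF b]] card_remove_removable[OF Suc.prems(1) b] Suc.prems(2)
      by simp
  qed
  then show ?case by simp
qed simp

section \<open>Extensions of a standard Young tableau\<close>

lemma syt_zero: "syt \<nu> S \<Longrightarrow> c \<notin> \<nu> \<Longrightarrow> S c = 0"
  using skew_syt_zero[of \<nu> "{}" S c] by (simp add: syt_def)

lemma syt_range: "syt \<nu> S \<Longrightarrow> c \<in> \<nu> \<Longrightarrow> S c \<in> {1..card \<nu>}"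
  using skew_syt_range[of \<nu> "{}" S c] by (simp add: syt_def)

lemma syt_le_card: "syt \<nu> S \<Longrightarrow> S c \<le> card \<nu>"
  using syt_range[of \<nu> S c] syt_zero[of \<nu> S c] by (cases "c \<in> \<nu>") auto

lemma syt_mem_iff: "syt \<nu> S \<Longrightarrow> c \<in> \<nu> \<longleftrightarrow> S c \<noteq> 0"
  using syt_range[of \<nu> S c] syt_zero[of \<nu> S c] by (cases "c \<in> \<nu>") auto

definition extensions :: "nat \<Rightarrow> (nat \<times> nat \<Rightarrow> nat) \<Rightarrow> (nat \<times> nat) set \<Rightarrow> (nat \<times> nat \<Rightarrow> nat) set" where
  "extensions k T \<nu> = {T'. syt \<nu> T' \<and> restrict_le k T' = T}"

lemma finite_extensions: "finite \<nu> \<Longrightarrow> finite (extensions k T \<nu>)"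
  unfolding extensions_def syt_def
  by (rule finite_subset[OF _ finite_skew_syt[of \<nu> "{}"]]) auto

lemma shape_eq_extension_entries_le:
  assumes T: "syt lam T" and T': "T' \<in> extensions k T \<nu>"
  shows "lam = {c \<in> \<nu>. T' c \<le> k}"
  using T' syt_mem_iff[OF T] syt_mem_iff[of \<nu> T']
  by (auto simp: extensions_def restrict_le_def split: if_splits)

text \<open>Truncated subtraction sends the entries of lam, and the zeros outside \<open>\<nu>\<close>, to 0.\<close>

lemma skew_syt_of_extension:
  assumes T: "syt lam T" "card lam = k" and T': "T' \<in> extensions k T \<nu>"
  shows "skew_syt \<nu> lam (\<lambda>c. T' c - k)"
proof -
  have lam: "lam = {c \<in> \<nu>. T' c \<le> k}"
    using shape_eq_extension_entries_le[OF T(1) T'] .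
  have syt: "syt \<nu> T'" using T' by (simp add: extensions_def)
  then have bij: "bij_betw T' \<nu> {1..card \<nu>}" by (simp add: skew_syt_def syt_def)
  then have "finite \<nu>"
    using bij_betw_finite by blast
  then have card: "card (\<nu> - lam) = card \<nu> - k"
    using T(2) lam by (simp add: card_Diff_subset)
  have "bij_betw T' (\<nu> - lam) {k<..card \<nu>}"
    using bij lam unfolding bij_betw_def inj_on_def by (auto simp: image_iff) force+
  then have "bij_betw ((\<lambda>x. x - k) \<circ> T') (\<nu> - lam) {1..card \<nu> - k}"
    by (rule bij_betw_trans) (auto intro!: bij_betw_byWitness[where f' = "\<lambda>x. x + k"])
  moreover have "T' c - k = 0" if "c \<notin> \<nu> - lam" for c
    using lam that syt_zero[OF syt, of c] by auto
  moreover have "T' (i, j) - k \<le> T' (i', j') - k"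
    if "(i, j) \<in> \<nu> - lam" "(i', j') \<in> \<nu> - lam" "i \<le> i'" "j \<le> j'" for i j i' j'
    using skew_syt_mono[of \<nu> "{}" T' i j i' j'] syt that by (simp add: syt_def diff_le_mono)
  ultimately show ?thesis
    unfolding skew_syt_def card by (simp add: comp_def)
qed

lemma extension_of_skew_syt:
  assumes "young lam" and T: "syt lam T" "card lam = k" and "lam \<subseteq> \<nu>" and S: "skew_syt \<nu> lam S"
  shows "(\<lambda>c. if S c = 0 then T c else S c + k) \<in> extensions k T \<nu>"
proof -
  define T' where "T' = (\<lambda>c. if S c = 0 then T c else S c + k)"
  have S_pos: "S c \<noteq> 0 \<longleftrightarrow> c \<in> \<nu> - lam" for c
    using skew_syt_range[OF S, of c] skew_syt_zero[OF S, of c] by (cases "c \<in> \<nu> - lam") auto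
  have "bij_betw S (\<nu> - lam) {1..card (\<nu> - lam)}"
    using S by (simp add: skew_syt_def)
  then have "bij_betw ((\<lambda>x. x + k) \<circ> S) (\<nu> - lam) {k + 1..k + card (\<nu> - lam)}"
    by (rule bij_betw_trans) (auto intro!: bij_betw_byWitness[where f' = "\<lambda>x. x - k"])
  then have upper: "bij_betw T' (\<nu> - lam) {k + 1..k + card (\<nu> - lam)}"
    by (rule bij_betw_cong[THEN iffD1, rotated]) (use S_pos in \<open>force simp: T'_def\<close>)
  have lower: "bij_betw T' lam {1..k}"
    using T S_pos bij_betw_cong[of lam T' T] by (simp add: T'_def skew_syt_def syt_def)
  have "finite lam" "finite (\<nu> - lam)"
    using bij_betw_finite lower upper by blast+
  then have card: "card \<nu> = k + card (\<nu> - lam)"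
    using T(2) \<open>lam \<subseteq> \<nu>\<close> by (metis Diff_partition card_Un_disjoint Diff_disjoint)
  have "{1..k} \<union> {k + 1..k + card (\<nu> - lam)} = {1..card \<nu>}"
    unfolding card by auto
  then have bij: "bij_betw T' \<nu> {1..card \<nu>}"
    using bij_betw_combine[OF lower upper] Diff_partition[OF \<open>lam \<subseteq> \<nu>\<close>] by auto
  have "T' c = 0" if "c \<notin> \<nu>" for c
    using that syt_zero[OF T(1), of c] S_pos \<open>lam \<subseteq> \<nu>\<close> by (auto simp: T'_def)
  moreover have "T' (i, j) \<le> T' (i', j')"
    if "(i, j) \<in> \<nu>" "(i', j') \<in> \<nu>" "i \<le> i'" "j \<le> j'" for i j i' j'
  proof (cases "(i', j') \<in> lam")
    case True
    then have "(i, j) \<in> lam"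
      using young_downclosed[OF \<open>young lam\<close>] that by blast
    then show ?thesis
      using True skew_syt_mono[of lam "{}" T i j i' j'] T(1) S_pos that
      by (simp add: T'_def syt_def)
  next
    case False
    then have "S (i', j') \<noteq> 0" "S (i, j) = 0 \<longleftrightarrow> (i, j) \<in> lam"
      using S_pos that by blast+
    then show ?thesis
      using skew_syt_mono[OF S, of i j i' j'] syt_le_card[OF T(1), of "(i, j)"] T(2) False that
      by (cases "(i, j) \<in> lam") (auto simp: T'_def)
  qed
  moreover have "restrict_le k T' c = T c" for c
  proof (cases "S c = 0")
    case True
    then show ?thesis
      using syt_le_card[OF T(1), of c] T(2) by (simp add: restrict_le_def T'_def)
  next
    case False
    then show ?thesis
      using S_pos[of c] syt_zero[OF T(1), of c] by (simp add: restrict_le_def T'_def)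
  qed
  ultimately show ?thesis
    using bij unfolding extensions_def syt_def skew_syt_def T'_def by (simp add: fun_eq_iff)
qed

lemma card_extensions:
  assumes "young lam" "syt lam T" "card lam = k"
  shows "card (extensions k T \<nu>) = skew_f \<nu> lam"
proof (cases "lam \<subseteq> \<nu>")
  case False
  then have "extensions k T \<nu> = {}"
    using shape_eq_extension_entries_le[OF assms(2)] by blast
  then show ?thesis
    using False by (simp add: skew_f_def)
next
  case True
  have "bij_betw (\<lambda>T' c. T' c - k) (extensions k T \<nu>) {S. skew_syt \<nu> lam S}"
  proof (rule bij_betw_byWitness[where f' = "\<lambda>S c. if S c = 0 then T c else S c + k"])
    show "\<forall>T'\<in>extensions k T \<nu>. (\<lambda>c. if T' c - k = 0 then T c else T' c - k + k) = T'"
      by (auto simp: extensions_def restrict_le_def fun_eq_iff)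
    show "\<forall>S\<in>{S. skew_syt \<nu> lam S}. (\<lambda>c. (if S c = 0 then T c else S c + k) - k) = S"
      using syt_le_card[OF assms(2)] assms(3) by (simp add: fun_eq_iff)
    show "(\<lambda>T' c. T' c - k) ` extensions k T \<nu> \<subseteq> {S. skew_syt \<nu> lam S}"
      using skew_syt_of_extension[OF assms(2,3)] by blast
    show "(\<lambda>S c. if S c = 0 then T c else S c + k) ` {S. skew_syt \<nu> lam S} \<subseteq> extensions k T \<nu>"
      using extension_of_skew_syt[OF assms True] by blast
  qed
  then show ?thesis
    using True by (simp add: skew_f_def bij_betw_same_card)
qed

lemma syt_shape_unique: "syt \<nu> S \<Longrightarrow> syt \<nu>' S \<Longrightarrow> \<nu> = \<nu>'"
  using syt_mem_iff by blast

lemma sum_down_paths_eq_sum_skew_f: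
  assumes "young L" "card L = k"
  shows "(\<Sum>i\<le>m. up_down_coeff m i * down_paths i L)
    = (\<Sum>j = 0..k. \<Sum>\<mu> \<in> {\<mu>. young \<mu> \<and> card \<mu> = j}.
         skew_f L \<mu> * (m choose (k - j)) * num_involutions (m + j - k))"
proof -
  have "(\<Sum>i\<le>m. up_down_coeff m i * down_paths i L) = (\<Sum>i\<le>m + k. up_down_coeff m i * down_paths i L)"
    by (rule sum.mono_neutral_left) (auto simp: up_down_coeff_def)
  also have "\<dots> = (\<Sum>i\<le>k. up_down_coeff m i * down_paths i L)"
    using down_paths_eq_0[OF assms(1)] assms(2) by (intro sum.mono_neutral_right) auto
  also have "\<dots> = (\<Sum>j = 0..k. up_down_coeff m (k - j) * down_paths (k - j) L)"
    unfolding atLeast0AtMost[symmetric] by (subst sum.atLeastAtMost_rev) simp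
  also have "\<dots> = (\<Sum>j = 0..k. \<Sum>\<mu> \<in> {\<mu>. young \<mu> \<and> card \<mu> = j}.
         skew_f L \<mu> * (m choose (k - j)) * num_involutions (m + j - k))"
  proof (rule sum.cong[OF refl])
    fix j assume "j \<in> {0..k}"
    then have "down_paths (k - j) L = (\<Sum>\<mu> \<in> young_diagrams j. skew_f L \<mu>)"
      "m - (k - j) = m + j - k"
      using sum_skew_f_eq_down_paths[OF assms(1), of "k - j"] assms(2) by auto
    then show "up_down_coeff m (k - j) * down_paths (k - j) L = (\<Sum>\<mu> \<in> {\<mu>. young \<mu> \<and> card \<mu> = j}.
         skew_f L \<mu> * (m choose (k - j)) * num_involutions (m + j - k))"
      by (simp add: up_down_coeff_def young_diagrams_def sum_distrib_left sum_distrib_right algebra_simps)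
  qed
  finally show ?thesis .
qed

lemma card_syt_extending:
  "card {T'. \<exists>D. young D \<and> card D = n \<and> syt D T' \<and> restrict_le k T' = T}
    = (\<Sum>\<nu>\<in>young_diagrams n. card (extensions k T \<nu>))"
proof -
  have "{T'. \<exists>D. young D \<and> card D = n \<and> syt D T' \<and> restrict_le k T' = T}
      = (\<Union>\<nu>\<in>young_diagrams n. extensions k T \<nu>)"
    by (auto simp: young_diagrams_def extensions_def)
  also have "card \<dots> = (\<Sum>\<nu>\<in>young_diagrams n. card (extensions k T \<nu>))"
  proof (rule card_UN_disjoint)
    show "\<forall>\<nu>\<in>young_diagrams n. finite (extensions k T \<nu>)"
      by (simp add: young_diagrams_def finite_extensions young_finite)
    show "\<forall>\<nu>\<in>young_diagrams n. \<forall>\<nu>'\<in>young_diagrams n. \<nu> \<noteq> \<nu>' \<longrightarrow> extensions k T \<nu> \<inter> extensions k T \<nu>' = {}"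
      using syt_shape_unique by (auto simp: extensions_def)
  qed (rule finite_young_diagrams)
  finally show ?thesis .
qed

theorem mainTheorem15:
  fixes lam :: "(nat \<times> nat) set" and T :: "nat \<times> nat \<Rightarrow> nat" and k n :: nat
  assumes "young lam" and "card lam = k" and "syt lam T" and "k \<le> n"
  shows "card {T'. \<exists>D. young D \<and> card D = n \<and> syt D T' \<and> restrict_le k T' = T}
    = (\<Sum>j = 0..k. \<Sum>mu \<in> {mu. young mu \<and> card mu = j}.
         skew_f lam mu * ((n - k) choose (k - j)) * num_involutions (n + j - 2 * k))"
proof -
  have "card {T'. \<exists>D. young D \<and> card D = n \<and> syt D T' \<and> restrict_le k T' = T}
      = (\<Sum>\<nu>\<in>young_diagrams n. card (extensions k T \<nu>))"
    by (rule card_syt_extending)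
  also have "\<dots> = (\<Sum>\<nu>\<in>young_diagrams (card lam + (n - k)). skew_f \<nu> lam)"
    using card_extensions[OF assms(1,3,2)] assms(2,4) by simp
  also have "\<dots> = (\<Sum>i\<le>n - k. up_down_coeff (n - k) i * down_paths i lam)"
    using sum_skew_f_eq_up_paths[OF assms(1)] up_paths_eq_sum_down_paths[OF assms(1)] by simp
  also have "\<dots> = (\<Sum>j = 0..k. \<Sum>mu \<in> {mu. young mu \<and> card mu = j}.
         skew_f lam mu * ((n - k) choose (k - j)) * num_involutions (n + j - 2 * k))"
    using sum_down_paths_eq_sum_skew_f[OF assms(1,2), of "n - k"] assms(4)
    by (simp add: diff_add_assoc2 mult_2 add.commute)
  finally show ?thesis .
qed

end
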